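(* For every integer $n\ge 4$, in the Maker–Breaker transversal game on an $n\times n$ grid, the first player (Maker) has a winning strategy; moreover Maker can win with a strategy whose first move is the top-left cell $(1,1)$.
   Context: A transversal of an $n\times n$ grid is a set of $n$ cells no two of which lie in the same row or the same column. Cell $(a,b)$ denotes the cell in row $a$ (counted from the top) and column $b$ (counted from the left). In the Maker–Breaker transversal game on an $n\times n$ grid, two players alternately claim unoccupied cells, Maker moving first. Maker wins if at some point he has claimed all $n$ cells of some transversal; otherwise (in particular if the grid is filled without this happening) Breaker wins. Breaker claiming a transversal has no effect. *)

theory Defs
  imports Main
begin

definition grid :: "nat \<Rightarrow> (nat \<times> nat) set" where
  "grid n = {1..n} \<times> {1..n}"

definition is_transversal :: "nat \<Rightarrow> (nat \<times> nat) set \<Rightarrow> bool" where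
  "is_transversal n T \<longleftrightarrow> T \<subseteq> grid n \<and> card T = n \<and> inj_on fst T \<and> inj_on snd T"

definition has_transversal :: "nat \<Rightarrow> (nat \<times> nat) set \<Rightarrow> bool" where
  "has_transversal n M \<longleftrightarrow> (\<exists>T. T \<subseteq> M \<and> is_transversal n T)"

text \<open>maker_wins n M B: in the position where Maker owns M, Breaker owns B and it is
  Maker's turn, Maker has a winning strategy. Maker wins as soon as his cells contain a
  transversal; if the board fills up first, Breaker wins. (The game is finite, so the
  least fixed point characterises exactly the positions with a winning strategy.)\<close>
inductive maker_wins :: "nat \<Rightarrow> (nat \<times> nat) set \<Rightarrow> (nat \<times> nat) set \<Rightarrow> bool"
  for n :: nat where
  win_now: "\<lbrakk> c \<in> grid n - M - B; has_transversal n (insert c M) \<rbrakk> \<Longrightarrow> maker_wins n M B"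
| win_later: "\<lbrakk> c \<in> grid n - M - B; grid n - insert c M - B \<noteq> {};
     \<forall>d \<in> grid n - insert c M - B. maker_wins n (insert c M) (insert d B) \<rbrakk>
     \<Longrightarrow> maker_wins n M B"

definition maker_wins_with_move :: "nat \<Rightarrow> (nat \<times> nat) set \<Rightarrow> (nat \<times> nat) set \<Rightarrow> nat \<times> nat \<Rightarrow> bool" where
  "maker_wins_with_move n M B c \<longleftrightarrow> c \<in> grid n - M - B \<and>
     (has_transversal n (insert c M) \<or>
      (grid n - insert c M - B \<noteq> {} \<and>
       (\<forall>d \<in> grid n - insert c M - B. maker_wins n (insert c M) (insert d B))))"

end

theory Submission
  imports Defs "HOL-Library.Disjoint_Sets"
begin

(* Maker plays a pairing strategy: the free cells contain a family of disjoint pairs, and whenever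
   Breaker claims a cell of a pair, Maker claims the other one, so Maker ends up with a cell of
   every pair. Write n = 2m or n = 2m + 1 and group the lines into m cyclically ordered blocks of
   two consecutive rows and columns, after the corner (1,1) when n is odd; Maker takes (1,1) first.
   Pair the two cells of each row of a block lying in the block's own columns, and the two cells of
   each column of the next block lying in the block's rows. A set S meeting every pair then contains
   a transversal: every row sees S in its own block, and every column of the next block sees S in
   the block's rows. If in each block the two rows see different own columns, this is a
   transversal; otherwise a block whose rows see only one column breaks the cyclic dependencies,
   and going around the cycle each block hands one of its rows to a column of the next block. *)

lemma finite_grid: "finite (grid n)"
  unfolding grid_def by simp

lemma maker_wins_if_wins_with_move: "maker_wins_with_move n M B c \<Longrightarrow> maker_wins n M B"
  unfolding maker_wins_with_move_def by (metis maker_wins.win_now maker_wins.win_later)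

(* Maker is to move; a single-cell pair is the partner of the cell Breaker has just claimed. *)
definition pairing_position ::
    "nat \<Rightarrow> (nat \<times> nat) set \<Rightarrow> (nat \<times> nat) set \<Rightarrow> (nat \<times> nat) set set \<Rightarrow> bool" where
  "pairing_position n M B P \<longleftrightarrow>
     (\<forall>q\<in>P. q \<subseteq> grid n - M - B \<and> card q \<in> {1, 2}) \<and> disjoint P \<and>
     (\<forall>q\<in>P. \<forall>q'\<in>P. card q = 1 \<longrightarrow> card q' = 1 \<longrightarrow> q = q') \<and>
     (\<forall>S. (\<forall>q\<in>P. q \<inter> S \<noteq> {}) \<longrightarrow> has_transversal n (M \<union> S))"

lemma pairing_position_pivot:
  assumes "pairing_position n M B P" and "P \<noteq> {}"
  obtains p where "p \<in> P" and "\<forall>q\<in>P - {p}. card q = 2"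
proof -
  have sizes: "\<forall>q\<in>P. card q \<in> {1, 2}"
    and unique: "\<forall>q\<in>P. \<forall>q'\<in>P. card q = 1 \<longrightarrow> card q' = 1 \<longrightarrow> q = q'"
    using assms(1) unfolding pairing_position_def by blast+
  obtain p where "p \<in> P" and "\<forall>q\<in>P. card q = 1 \<longrightarrow> q = p"
  proof (cases "\<exists>p\<in>P. card p = 1")
    case True
    with unique that show ?thesis by blast
  next
    case False
    with assms(2) that show ?thesis by blast
  qed
  with sizes show ?thesis
    using that by blast
qed

lemma pairing_position_reply:
  assumes pos: "pairing_position n M B P"
    and p: "p \<in> P" "\<forall>q\<in>P - {p}. card q = 2" and x: "x \<in> p"
    and d: "d \<in> grid n - insert x M - B"
  shows "pairing_position n (insert x M) (insert d B) ((\<lambda>q. q - {d}) ` (P - {p}))"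
proof -
  have free: "\<forall>q\<in>P. q \<subseteq> grid n - M - B" and disj: "disjoint P"
    and hit: "\<forall>S. (\<forall>q\<in>P. q \<inter> S \<noteq> {}) \<longrightarrow> has_transversal n (M \<union> S)"
    using pos unfolding pairing_position_def by blast+
  have x_notin: "x \<notin> q" if "q \<in> P - {p}" for q
    using disj p(1) that x by (auto simp: disjoint_def)
  have card_Diff: "card (q - {d}) \<in> {1, 2}" if "q \<in> P - {p}" for q
    using p(2) that by (auto simp: card_Diff_singleton_if)
  have broken: "d \<in> q" if "q \<in> P - {p}" "card (q - {d}) = 1" for q
    using p(2) that by (cases "d \<in> q") auto
  have hit': "has_transversal n (insert x M \<union> S)"
    if "\<forall>q'\<in>(\<lambda>q. q - {d}) ` (P - {p}). q' \<inter> S \<noteq> {}" for S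
  proof -
    have "\<forall>q\<in>P. q \<inter> insert x S \<noteq> {}"
      using that x by auto
    then have "has_transversal n (M \<union> insert x S)"
      using hit by blast
    then show ?thesis
      by simp
  qed
  show ?thesis
    unfolding pairing_position_def
  proof (intro conjI)
    show "\<forall>q'\<in>(\<lambda>q. q - {d}) ` (P - {p}).
        q' \<subseteq> grid n - insert x M - insert d B \<and> card q' \<in> {1, 2}"
    proof
      fix q' assume "q' \<in> (\<lambda>q. q - {d}) ` (P - {p})"
      then obtain q where q: "q \<in> P - {p}" and q': "q' = q - {d}" by blast
      have "q \<subseteq> grid n - M - B" "x \<notin> q"
        using free q x_notin by auto
      then show "q' \<subseteq> grid n - insert x M - insert d B \<and> card q' \<in> {1, 2}"
        using card_Diff[OF q] unfolding q' by blast
    qed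
    show "disjoint ((\<lambda>q. q - {d}) ` (P - {p}))"
    proof (rule disjointI)
      fix a b assume "a \<in> (\<lambda>q. q - {d}) ` (P - {p})" "b \<in> (\<lambda>q. q - {d}) ` (P - {p})" "a \<noteq> b"
      then obtain qa qb where "qa \<in> P" "qb \<in> P" "qa \<noteq> qb" "a = qa - {d}" "b = qb - {d}"
        by blast
      then show "a \<inter> b = {}"
        using disjointD[OF disj] by blast
    qed
    show "\<forall>q1'\<in>(\<lambda>q. q - {d}) ` (P - {p}). \<forall>q2'\<in>(\<lambda>q. q - {d}) ` (P - {p}).
        card q1' = 1 \<longrightarrow> card q2' = 1 \<longrightarrow> q1' = q2'"
    proof (intro ballI impI)
      fix a b assume "a \<in> (\<lambda>q. q - {d}) ` (P - {p})" "b \<in> (\<lambda>q. q - {d}) ` (P - {p})"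
        and "card a = 1" "card b = 1"
      then obtain qa qb where "qa \<in> P" "qb \<in> P" "d \<in> qa" "d \<in> qb" "a = qa - {d}" "b = qb - {d}"
        using broken by blast
      then show "a = b"
        using disjointD[OF disj] by blast
    qed
    show "\<forall>S. (\<forall>q'\<in>(\<lambda>q. q - {d}) ` (P - {p}). q' \<inter> S \<noteq> {}) \<longrightarrow>
        has_transversal n (insert x M \<union> S)"
      using hit' by blast
  qed
qed

theorem maker_wins_with_move_pairing:
  assumes "pairing_position n M B P"
    and "p \<in> P" "\<forall>q\<in>P - {p}. card q = 2" and "x \<in> p"
  shows "maker_wins_with_move n M B x"
  using assms
proof (induction "card (grid n - M - B)" arbitrary: M B P p x rule: less_induct)
  case less
  note pos = less.prems(1) and p = less.prems(2,3) and x = less.prems(4)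
  have free: "\<forall>q\<in>P. q \<subseteq> grid n - M - B" and disj: "disjoint P"
    and hit: "\<forall>S. (\<forall>q\<in>P. q \<inter> S \<noteq> {}) \<longrightarrow> has_transversal n (M \<union> S)"
    using pos unfolding pairing_position_def by blast+
  have x_free: "x \<in> grid n - M - B"
    using free p(1) x by (meson Diff_iff subsetD)
  show ?case
  proof (cases "P - {p} = {}")
    case True
    then have "\<forall>q\<in>P. q \<inter> {x} \<noteq> {}"
      using x by blast
    then have "has_transversal n (insert x M)"
      using hit by (metis Un_empty_right Un_insert_right)
    with x_free show ?thesis
      unfolding maker_wins_with_move_def by blast
  next
    case False
    then obtain q0 where q0: "q0 \<in> P - {p}" by blast
    have "p \<inter> q0 = {}"
      using disjointD[OF disj p(1)] q0 by auto
    then have "q0 \<subseteq> grid n - insert x M - B"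
      using free q0 x by auto
    moreover have "q0 \<noteq> {}"
      using p(2) q0 by (metis card.empty zero_neq_numeral)
    moreover have "maker_wins n (insert x M) (insert d B)"
      if d: "d \<in> grid n - insert x M - B" for d
    proof -
      define P' where "P' = (\<lambda>q. q - {d}) ` (P - {p})"
      have pos': "pairing_position n (insert x M) (insert d B) P'"
        unfolding P'_def using pairing_position_reply[OF pos p x d] .
      have "P' \<noteq> {}"
        unfolding P'_def using q0 by auto
      then obtain p' where p': "p' \<in> P'" "\<forall>q\<in>P' - {p'}. card q = 2"
        by (rule pairing_position_pivot[OF pos'])
      then have "card p' \<in> {1, 2}"
        using pos' unfolding pairing_position_def by blast
      then obtain x' where "x' \<in> p'"
        by (metis card.empty empty_iff equals0I insertE zero_neq_numeral zero_neq_one)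
      moreover have "card (grid n - insert x M - insert d B) < card (grid n - M - B)"
        using d x_free by (intro psubset_card_mono) (auto simp: finite_grid)
      ultimately have "maker_wins_with_move n (insert x M) (insert d B) x'"
        using less.hyps pos' p' by blast
      then show ?thesis
        by (rule maker_wins_if_wins_with_move)
    qed
    ultimately show ?thesis
      using x_free unfolding maker_wins_with_move_def by blast
  qed
qed

fun block_line :: "nat \<times> bool \<Rightarrow> nat" where
  "block_line (k, b) = 2 * k + of_bool b + 1"

lemma block_line_eq_iff: "block_line u = block_line v \<longleftrightarrow> u = v"
  by (cases u; cases v) (auto split: if_splits; presburger)

lemma bij_betw_block_line: "bij_betw block_line ({..<m} \<times> UNIV) {1..2 * m}"
proof (rule bij_betw_imageI)
  show "inj_on block_line ({..<m} \<times> UNIV)"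
    by (meson block_line_eq_iff inj_onI)
  have "r \<in> block_line ` ({..<m} \<times> UNIV)" if "r \<in> {1..2 * m}" for r
  proof -
    have "r = block_line ((r - 1) div 2, odd (r - 1))" "(r - 1) div 2 < m"
      using that by auto
    then show ?thesis
      by blast
  qed
  moreover have "block_line ` ({..<m} \<times> UNIV) \<subseteq> {1..2 * m}"
    by auto
  ultimately show "block_line ` ({..<m} \<times> UNIV) = {1..2 * m}"
    by blast
qed

lemma is_transversal_image:
  assumes f: "bij_betw f A {1..n}" and g: "bij_betw g A {1..n}"
  shows "is_transversal n ((\<lambda>a. (f a, g a)) ` A)"
  unfolding is_transversal_def
proof (intro conjI)
  show "(\<lambda>a. (f a, g a)) ` A \<subseteq> grid n"
    using bij_betw_imp_surj_on[OF f] bij_betw_imp_surj_on[OF g] unfolding grid_def by blast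
  have "inj_on (\<lambda>a. (f a, g a)) A"
    using bij_betw_imp_inj_on[OF f] by (auto intro: inj_onI dest: inj_onD)
  then show "card ((\<lambda>a. (f a, g a)) ` A) = n"
    using bij_betw_same_card[OF f] by (simp add: card_image)
  show "inj_on fst ((\<lambda>a. (f a, g a)) ` A)"
    using bij_betw_imp_inj_on[OF f] by (auto intro!: inj_onI dest: inj_onD)
  show "inj_on snd ((\<lambda>a. (f a, g a)) ` A)"
    using bij_betw_imp_inj_on[OF g] by (auto intro!: inj_onI dest: inj_onD)
qed

lemma is_transversal_insert_corner:
  assumes "is_transversal n T"
  shows "is_transversal (Suc n) (insert (1, 1) ((\<lambda>(r, c). (Suc r, Suc c)) ` T))"
proof -
  have T: "T \<subseteq> {1..n} \<times> {1..n}" "card T = n" "inj_on fst T" "inj_on snd T"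
    using assms unfolding is_transversal_def grid_def by auto
  have inj_shift: "inj_on (\<lambda>(r, c). (Suc r, Suc c)) T"
    by (auto intro: inj_onI)
  have corner_new: "(1, 1) \<notin> (\<lambda>(r, c). (Suc r, Suc c)) ` T"
    using T(1) by auto
  show ?thesis
    unfolding is_transversal_def
  proof (intro conjI)
    show "insert (1, 1) ((\<lambda>(r, c). (Suc r, Suc c)) ` T) \<subseteq> grid (Suc n)"
      using T(1) unfolding grid_def by auto
    have "finite T"
      using T(1) by (rule finite_subset) simp
    then show "card (insert (1, 1) ((\<lambda>(r, c). (Suc r, Suc c)) ` T)) = Suc n"
      using corner_new T(2) by (simp add: card_image[OF inj_shift])
    show "inj_on fst (insert (1, 1) ((\<lambda>(r, c). (Suc r, Suc c)) ` T))"
      using T(1,3) by (auto simp: inj_on_def) fastforce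
    show "inj_on snd (insert (1, 1) ((\<lambda>(r, c). (Suc r, Suc c)) ` T))"
      using T(1,4) by (auto simp: inj_on_def) fastforce
  qed
qed

definition cyc_succ :: "nat \<Rightarrow> nat \<Rightarrow> nat" where
  "cyc_succ m k = (if Suc k = m then 0 else Suc k)"

lemma cyc_succ_less: "k < m \<Longrightarrow> cyc_succ m k < m"
  unfolding cyc_succ_def by auto

lemma cyc_succ_inj: "k < m \<Longrightarrow> k' < m \<Longrightarrow> cyc_succ m k = cyc_succ m k' \<Longrightarrow> k = k'"
  unfolding cyc_succ_def by (auto split: if_splits)

lemma cyc_succ_neq: "2 \<le> m \<Longrightarrow> k < m \<Longrightarrow> cyc_succ m k \<noteq> k"
  unfolding cyc_succ_def by auto

lemma cyclic_recurrence_solvable: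
  fixes g :: "nat \<Rightarrow> 'a \<Rightarrow> 'a"
  assumes k0: "k0 < m" and const: "\<And>a b. g k0 a = g k0 b"
  shows "\<exists>y. \<forall>k<m. y k = g (cyc_succ m k) (y (cyc_succ m k))"
proof -
  \<comment> \<open>the number of steps back from the predecessor of k0; the recurrence is unrolled along it\<close>
  define dist where "dist k = (if k < k0 then k0 - 1 - k else k0 + m - 1 - k)" for k
  define z where "z = rec_nat (g k0 undefined) (\<lambda>t v. g (dist t) v)"
  have dist_dist: "dist (dist k) = k" if "k < m" for k
    using that k0 unfolding dist_def by auto
  have dist_start: "dist k = 0" if "k < m" "cyc_succ m k = k0" for k
    using that k0 unfolding dist_def cyc_succ_def by (auto split: if_splits)
  have dist_step: "dist k = Suc (dist (cyc_succ m k))" if "k < m" "cyc_succ m k \<noteq> k0" for k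
    using that k0 unfolding dist_def cyc_succ_def by (auto split: if_splits)
  have "z (dist k) = g (cyc_succ m k) (z (dist (cyc_succ m k)))" if k: "k < m" for k
  proof (cases "cyc_succ m k = k0")
    case True
    then show ?thesis
      using dist_start[OF k] const by (simp add: z_def)
  next
    case False
    then show ?thesis
      using dist_step[OF k False] dist_dist[OF cyc_succ_less[OF k]] by (simp add: z_def)
  qed
  then show ?thesis
    by (intro exI[of _ "z \<circ> dist"]) simp
qed

(* Rows and columns of block k are indexed by (k, b). Row (k, b) may be matched to column X k b of
   its own block, or to any column c of the next block with P k c = b; there is a perfect matching. *)
lemma cyclic_block_matching:
  fixes X P :: "nat \<Rightarrow> bool \<Rightarrow> bool"
  shows "\<exists>\<tau>. inj_on \<tau> ({..<m} \<times> UNIV) \<and>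
    (\<forall>k<m. \<forall>b. \<tau> (k, b) = (k, X k b) \<or> (\<exists>c. \<tau> (k, b) = (cyc_succ m k, c) \<and> P k c = b))"
proof (cases "\<forall>k<m. X k True \<noteq> X k False")
  case True
  have "inj_on (\<lambda>(k, b). (k, X k b)) ({..<m} \<times> UNIV)"
    using True by (auto intro!: inj_onI) (metis (full_types))+
  then show ?thesis
    by (intro exI[of _ "\<lambda>(k, b). (k, X k b)"]) simp
next
  case False
  then obtain k0 where k0: "k0 < m" "X k0 True = X k0 False" by blast
  \<comment> \<open>Block k hands its row P k (y k) to column y k of the next block; its other row takes
    its own column X k (\<not> P k (y k)), which must avoid the column y k' received from the previous
    block k'. This is the recurrence y k' = g k (y k), and the constant g k0 closes the cycle.\<close>
  define g where "g k c = (\<not> X k (\<not> P k c))" for k c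
  have "g k0 a = g k0 b" for a b
    unfolding g_def using k0(2) by (metis (full_types))
  then obtain y where y: "\<forall>k<m. y k = g (cyc_succ m k) (y (cyc_succ m k))"
    using cyclic_recurrence_solvable[OF k0(1)] by blast
  define \<tau> where "\<tau> = (\<lambda>(k, b). if b = P k (y k) then (cyc_succ m k, y k) else (k, X k b))"
  have no_clash: False
    if "k < m" "k' = cyc_succ m k" "b' \<noteq> P k' (y k')" "y k = X k' b'" for k k' b'
  proof -
    have "b' = (\<not> P k' (y k'))"
      using that(3) by blast
    moreover have "y k = (\<not> X k' (\<not> P k' (y k')))"
      using y that(1,2) unfolding g_def by simp
    ultimately show False
      using that(4) by simp
  qed
  have "inj_on \<tau> ({..<m} \<times> UNIV)"
  proof (rule inj_onI, clarify)
    fix k b k' b' assume k: "k < m" "k' < m" and eq: "\<tau> (k, b) = \<tau> (k', b')"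
    show "k = k' \<and> b = b'"
    proof (cases "b = P k (y k)"; cases "b' = P k' (y k')")
      assume "b = P k (y k)" "b' = P k' (y k')"
      with eq k show ?thesis
        unfolding \<tau>_def using cyc_succ_inj by auto
    next
      assume b: "b = P k (y k)" and b': "b' \<noteq> P k' (y k')"
      with eq have "k' = cyc_succ m k" "y k = X k' b'"
        unfolding \<tau>_def by auto
      then show ?thesis
        using no_clash[OF k(1) _ b'] by blast
    next
      assume b: "b \<noteq> P k (y k)" and b': "b' = P k' (y k')"
      with eq have "k = cyc_succ m k'" "y k' = X k b"
        unfolding \<tau>_def by auto
      then show ?thesis
        using no_clash[OF k(2) _ b] by blast
    next
      assume "b \<noteq> P k (y k)" "b' \<noteq> P k' (y k')"
      with eq show ?thesis
        unfolding \<tau>_def by auto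
    qed
  qed
  then show ?thesis
    by (intro exI[of _ \<tau>]) (auto simp: \<tau>_def)
qed

locale block_pairing =
  fixes n :: nat
  assumes four_le: "4 \<le> n"
begin

abbreviation blocks :: nat where "blocks \<equiv> n div 2"

(* For odd n, line 1 is left to the corner cell (1,1). *)
definition line :: "nat \<times> bool \<Rightarrow> nat" where
  "line u = n mod 2 + block_line u"

definition row_pair :: "nat \<Rightarrow> bool \<Rightarrow> (nat \<times> nat) set" where
  "row_pair k b = {(line (k, b), line (k, False)), (line (k, b), line (k, True))}"

definition column_pair :: "nat \<Rightarrow> bool \<Rightarrow> (nat \<times> nat) set" where
  "column_pair k c =
     {(line (k, False), line (cyc_succ blocks k, c)), (line (k, True), line (cyc_succ blocks k, c))}"

definition block_pairs :: "(nat \<times> nat) set set" where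
  "block_pairs = {row_pair k b | k b. k < blocks} \<union> {column_pair k c | k c. k < blocks}"

definition pairs :: "(nat \<times> nat) set set" where
  "pairs = block_pairs \<union> (if odd n then {{(1, 1)}} else {})"

lemma two_le_blocks: "2 \<le> blocks"
  using four_le by auto

lemma line_eq_iff: "line u = line v \<longleftrightarrow> u = v"
  unfolding line_def by (simp add: block_line_eq_iff)

lemma line_bounds:
  assumes "k < blocks"
  shows "n mod 2 < line (k, b) \<and> line (k, b) \<le> n"
proof -
  have "1 \<le> block_line (k, b)" "block_line (k, b) \<le> 2 * blocks"
    using assms by (cases b; simp)+
  moreover have "n mod 2 + 2 * blocks = n"
    by simp
  ultimately show ?thesis
    unfolding line_def by linarith
qed

lemma line_in_range: "k < blocks \<Longrightarrow> line (k, b) \<in> {1..n}"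
  using line_bounds[of k b] by simp

lemma mem_row_pair: "x \<in> row_pair k b \<longleftrightarrow> fst x = line (k, b) \<and> (\<exists>b'. snd x = line (k, b'))"
  unfolding row_pair_def by (cases x) (auto simp: ex_bool_eq)

lemma mem_column_pair:
  "x \<in> column_pair k c \<longleftrightarrow> (\<exists>b. fst x = line (k, b)) \<and> snd x = line (cyc_succ blocks k, c)"
  unfolding column_pair_def by (cases x) (auto simp: ex_bool_eq)

lemma block_pair_in_grid:
  assumes "q \<in> block_pairs"
  shows "q \<subseteq> grid n \<and> card q = 2"
  using assms unfolding block_pairs_def
proof (elim UnE CollectE exE conjE)
  fix k b assume "q = row_pair k b" "k < blocks"
  then show ?thesis
    using line_in_range[of k] unfolding row_pair_def grid_def by (simp add: line_eq_iff)
next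
  fix k c assume "q = column_pair k c" "k < blocks"
  then show ?thesis
    using line_in_range[of k] line_in_range[OF cyc_succ_less[of k blocks]]
    unfolding column_pair_def grid_def by (simp add: line_eq_iff)
qed

lemma corner_notin_block_pair:
  assumes "odd n" and "q \<in> block_pairs"
  shows "(1, 1) \<notin> q"
proof -
  have "line (k, b) \<noteq> 1" if "k < blocks" for k b
    using line_bounds[OF that, of b] assms(1) by (simp add: odd_iff_mod_2_eq_one)
  then show ?thesis
    using assms(2) unfolding block_pairs_def by (auto simp: mem_row_pair mem_column_pair)
qed

lemma row_pair_meet: "x \<in> row_pair k b \<Longrightarrow> x \<in> row_pair k' b' \<Longrightarrow> row_pair k b = row_pair k' b'"
  by (simp add: mem_row_pair line_eq_iff)

lemma column_pair_meet:
  assumes "k < blocks" "k' < blocks" "x \<in> column_pair k c" "x \<in> column_pair k' c'"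
  shows "column_pair k c = column_pair k' c'"
proof -
  have "cyc_succ blocks k = cyc_succ blocks k'" "c = c'"
    using assms(3,4) by (simp_all add: mem_column_pair line_eq_iff)
  then show ?thesis
    using cyc_succ_inj[OF assms(1,2)] by simp
qed

lemma row_column_pair_disjoint:
  assumes "k < blocks" "k' < blocks"
  shows "row_pair k b \<inter> column_pair k' c = {}"
proof -
  have "x \<notin> column_pair k' c" if "x \<in> row_pair k b" for x
    using that cyc_succ_neq[OF two_le_blocks assms(2)]
    by (auto simp: mem_row_pair mem_column_pair line_eq_iff)
  then show ?thesis
    by blast
qed

lemma disjoint_block_pairs: "disjoint block_pairs"
proof (rule disjointI)
  fix q q' assume q: "q \<in> block_pairs" and q': "q' \<in> block_pairs" and "q \<noteq> q'"
  have "q = q'" if x: "x \<in> q" "x \<in> q'" for x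
  proof -
    from q consider (row) k b where "k < blocks" "q = row_pair k b"
      | (column) k c where "k < blocks" "q = column_pair k c"
      unfolding block_pairs_def by blast
    then show ?thesis
    proof cases
      case row
      from q' consider (row') k' b' where "k' < blocks" "q' = row_pair k' b'"
        | (column') k' c' where "k' < blocks" "q' = column_pair k' c'"
        unfolding block_pairs_def by blast
      then show ?thesis
      proof cases
        case row'
        then show ?thesis
          using row row_pair_meet x by simp
      next
        case column'
        then show ?thesis
          using row row_column_pair_disjoint x by blast
      qed
    next
      case column
      from q' consider (row') k' b' where "k' < blocks" "q' = row_pair k' b'"
        | (column') k' c' where "k' < blocks" "q' = column_pair k' c'"
        unfolding block_pairs_def by blast
      then show ?thesis
      proof cases
        case row'
        then show ?thesis
          using column row_column_pair_disjoint x by blast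
      next
        case column'
        then show ?thesis
          using column column_pair_meet x by simp
      qed
    qed
  qed
  then show "q \<inter> q' = {}"
    using \<open>q \<noteq> q'\<close> by blast
qed

abbreviation block_sides :: "(nat \<times> bool) set" where
  "block_sides \<equiv> {..<blocks} \<times> UNIV"

lemma transversal_of_permutation:
  assumes "bij_betw \<tau> block_sides block_sides"
  shows "is_transversal n
    ((if odd n then {(1, 1)} else {}) \<union> (\<lambda>u. (line u, line (\<tau> u))) ` block_sides)"
proof -
  have T: "is_transversal (2 * blocks) ((\<lambda>u. (block_line u, block_line (\<tau> u))) ` block_sides)"
    using assms bij_betw_block_line[of blocks]
    by (intro is_transversal_image) (auto intro: bij_betw_trans[unfolded comp_def])
  show ?thesis
  proof (cases "even n")
    case True
    then have "n = 2 * blocks" "line = block_line"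
      unfolding line_def by auto
    with T True show ?thesis
      by simp
  next
    case False
    then have "line u = Suc (block_line u)" for u
      unfolding line_def by (simp add: odd_iff_mod_2_eq_one)
    then have "(\<lambda>(r, c). (Suc r, Suc c)) ` (\<lambda>u. (block_line u, block_line (\<tau> u))) ` block_sides =
        (\<lambda>u. (line u, line (\<tau> u))) ` block_sides"
      by (simp add: image_image)
    moreover have "n = Suc (2 * blocks)"
      using False by simp
    ultimately show ?thesis
      using False is_transversal_insert_corner[OF T] by simp
  qed
qed

lemma hitting_set_matching:
  assumes hit: "\<forall>q\<in>block_pairs. q \<inter> S \<noteq> {}"
  obtains \<tau> where "bij_betw \<tau> block_sides block_sides"
    and "(\<lambda>u. (line u, line (\<tau> u))) ` block_sides \<subseteq> S"
proof -
  define X where "X k b = ((line (k, b), line (k, True)) \<in> S)" for k b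
  define Q where "Q k c = ((line (k, True), line (cyc_succ blocks k, c)) \<in> S)" for k c
  have row_cell: "(line (k, b), line (k, X k b)) \<in> S" if "k < blocks" for k b
  proof -
    have "row_pair k b \<in> block_pairs"
      using that unfolding block_pairs_def by blast
    then show ?thesis
      using hit unfolding row_pair_def X_def by (cases "(line (k, b), line (k, True)) \<in> S") auto
  qed
  have column_cell: "(line (k, Q k c), line (cyc_succ blocks k, c)) \<in> S" if "k < blocks" for k c
  proof -
    have "column_pair k c \<in> block_pairs"
      using that unfolding block_pairs_def by blast
    then show ?thesis
      using hit unfolding column_pair_def Q_def
      by (cases "(line (k, True), line (cyc_succ blocks k, c)) \<in> S") auto
  qed
  obtain \<tau> where \<tau>_inj: "inj_on \<tau> block_sides" and \<tau>_edge: "\<forall>k<blocks. \<forall>b.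
      \<tau> (k, b) = (k, X k b) \<or> (\<exists>c. \<tau> (k, b) = (cyc_succ blocks k, c) \<and> Q k c = b)"
    using cyclic_block_matching[of blocks X Q] by blast
  have cell_and_side: "(line (k, b), line (\<tau> (k, b))) \<in> S \<and> \<tau> (k, b) \<in> block_sides"
    if k: "k < blocks" for k b
  proof -
    from \<tau>_edge k consider "\<tau> (k, b) = (k, X k b)"
      | c where "\<tau> (k, b) = (cyc_succ blocks k, c)" "Q k c = b"
      by blast
    then show ?thesis
    proof cases
      case 1
      then show ?thesis
        using row_cell[OF k] k by simp
    next
      case (2 c)
      then show ?thesis
        using column_cell[OF k, of c] cyc_succ_less[OF k] by simp
    qed
  qed
  have cell: "(line u, line (\<tau> u)) \<in> S" and side: "\<tau> u \<in> block_sides"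
    if "u \<in> block_sides" for u
  proof -
    obtain k b where u: "u = (k, b)"
      by (cases u)
    with that have "k < blocks"
      by simp
    then show "(line u, line (\<tau> u)) \<in> S" "\<tau> u \<in> block_sides"
      using cell_and_side[of k b] unfolding u by simp_all
  qed
  have "\<tau> ` block_sides \<subseteq> block_sides"
    by (rule image_subsetI) (rule side)
  then have "bij_betw \<tau> block_sides block_sides"
    using \<tau>_inj endo_inj_surj[of block_sides \<tau>] unfolding bij_betw_def by simp
  moreover have "(\<lambda>u. (line u, line (\<tau> u))) ` block_sides \<subseteq> S"
    by (rule image_subsetI) (rule cell)
  ultimately show ?thesis
    by (rule that)
qed

lemma hitting_set_has_transversal:
  assumes hit: "\<forall>q\<in>pairs. q \<inter> S \<noteq> {}"
  shows "has_transversal n S"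
proof -
  have "\<forall>q\<in>block_pairs. q \<inter> S \<noteq> {}"
    using hit unfolding pairs_def by simp
  then obtain \<tau> where \<tau>: "bij_betw \<tau> block_sides block_sides"
    and cells: "(\<lambda>u. (line u, line (\<tau> u))) ` block_sides \<subseteq> S"
    by (rule hitting_set_matching)
  have "(1, 1) \<in> S" if "odd n"
  proof -
    have "{(1, 1)} \<in> pairs"
      using that unfolding pairs_def by simp
    then show ?thesis
      using hit by blast
  qed
  with cells have "(if odd n then {(1, 1)} else {}) \<union> (\<lambda>u. (line u, line (\<tau> u))) ` block_sides \<subseteq> S"
    by simp
  then show ?thesis
    using transversal_of_permutation[OF \<tau>] unfolding has_transversal_def by blast
qed

lemma pairing_position_pairs: "pairing_position n {} {} pairs"
  unfolding pairing_position_def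
proof (intro conjI)
  show "\<forall>q\<in>pairs. q \<subseteq> grid n - {} - {} \<and> card q \<in> {1, 2}"
    using block_pair_in_grid four_le unfolding pairs_def grid_def by auto
  show "disjoint pairs"
    using disjoint_block_pairs corner_notin_block_pair unfolding pairs_def
    by (auto simp: disjoint_def)
  show "\<forall>q\<in>pairs. \<forall>q'\<in>pairs. card q = 1 \<longrightarrow> card q' = 1 \<longrightarrow> q = q'"
    using block_pair_in_grid unfolding pairs_def by auto
  show "\<forall>S. (\<forall>q\<in>pairs. q \<inter> S \<noteq> {}) \<longrightarrow> has_transversal n ({} \<union> S)"
    using hitting_set_has_transversal by simp
qed

lemma corner_pair:
  obtains p where "p \<in> pairs" "(1, 1) \<in> p" "\<forall>q\<in>pairs - {p}. card q = 2"
proof (cases "odd n")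
  case True
  then show ?thesis
    using that[of "{(1, 1)}"] block_pair_in_grid unfolding pairs_def by auto
next
  case False
  have "row_pair 0 False \<in> pairs"
    using two_le_blocks unfolding pairs_def block_pairs_def by force
  moreover have "(1, 1) \<in> row_pair 0 False"
    using False unfolding row_pair_def line_def by simp
  moreover have "\<forall>q\<in>pairs - {row_pair 0 False}. card q = 2"
    using False block_pair_in_grid unfolding pairs_def by auto
  ultimately show ?thesis
    by (rule that)
qed

end

theorem mainTheorem3:
  fixes n :: nat
  assumes "n \<ge> 4"
  shows "maker_wins n {} {} \<and> maker_wins_with_move n {} {} (1, 1)"
proof -
  interpret block_pairing n
    using assms by unfold_locales
  obtain p where "p \<in> pairs" "(1, 1) \<in> p" "\<forall>q\<in>pairs - {p}. card q = 2"
    by (rule corner_pair)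
  then have "maker_wins_with_move n {} {} (1, 1)"
    using maker_wins_with_move_pairing[OF pairing_position_pairs] by blast
  then show ?thesis
    using maker_wins_if_wins_with_move by blast
qed

end
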